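(* Let $E$ be a Banach space over $\mathbb C_p$ and let $c_0(E)$ be the Banach space of sequences $x=(x_0,x_1,x_2,\ldots)$ with $x_j\in E$ and $\|x_j\|_E\to0$, normed by $\|x\|=\sup_{j\ge0}\|x_j\|_E$. Let $T_E$ be the backward shift on $c_0(E)$, $T_E(x_0,x_1,x_2,\ldots)=(x_1,x_2,\ldots)$. Let $A$ be a bounded linear operator on $E$ with $\|A\|\le1$ such that $\|A^nu\|_E\to0$ as $n\to\infty$ for every $u\in E$. Then there exist a closed subspace $Y\subset c_0(E)$ invariant under $T_E$ and a surjective linear isometry $W:E\to Y$ such that $A=W^{-1}T_E^YW$, where $T_E^Y$ denotes the restriction of $T_E$ to $Y$.
   Context: $p$ is a prime and $\mathbb C_p$ is the completion of an algebraic closure of the $p$-adic field $\mathbb Q_p$ with respect to the extension of the $p$-adic absolute value; Banach spaces over $\mathbb C_p$ are non-Archimedean (norm satisfying the ultrametric inequality). *)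

theory Defs
  imports "HOL-Computational_Algebra.Computational_Algebra"
begin

definition nonarch_abs :: "('k::field \<Rightarrow> real) \<Rightarrow> bool" where
  "nonarch_abs absv \<longleftrightarrow>
     (\<forall>x. 0 \<le> absv x) \<and> (\<forall>x. absv x = 0 \<longleftrightarrow> x = 0) \<and>
     (\<forall>x y. absv (x * y) = absv x * absv y) \<and>
     (\<forall>x y. absv (x + y) \<le> max (absv x) (absv y))"

definition padic_val_rat :: "nat \<Rightarrow> rat \<Rightarrow> int" where
  "padic_val_rat p q =
     int (multiplicity (int p) (fst (quotient_of q))) - int (multiplicity (int p) (snd (quotient_of q)))"

definition padic_abs_rat :: "nat \<Rightarrow> rat \<Rightarrow> real" where
  "padic_abs_rat p q = (if q = 0 then 0 else real p powr (- real_of_int (padic_val_rat p q)))"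

definition algebraic_over_rat :: "'k::field_char_0 \<Rightarrow> bool" where
  "algebraic_over_rat x \<longleftrightarrow> (\<exists>q :: rat poly. q \<noteq> 0 \<and> poly (map_poly of_rat q) x = 0)"

text \<open>(K, absv) is (isometrically isomorphic to) C_p: a complete, algebraically closed
  valued field whose absolute value restricts to the p-adic one on Q and in which the
  elements algebraic over Q (= an algebraic closure of Q_p inside K) are dense,
  i.e. K is the completion of an algebraic closure of Q_p.\<close>
definition is_Cp :: "nat \<Rightarrow> ('k::field_char_0 \<Rightarrow> real) \<Rightarrow> bool" where
  "is_Cp p absv \<longleftrightarrow>
     prime p \<and> nonarch_abs absv \<and>
     (\<forall>q. absv (of_rat q) = padic_abs_rat p q) \<and>
     (\<forall>X :: nat \<Rightarrow> 'k. (\<forall>e>0. \<exists>N. \<forall>m\<ge>N. \<forall>n\<ge>N. absv (X m - X n) < e)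
          \<longrightarrow> (\<exists>L. (\<lambda>n. absv (X n - L)) \<longlonglongrightarrow> 0)) \<and>
     (\<forall>f :: 'k poly. 0 < degree f \<longrightarrow> (\<exists>x. poly f x = 0)) \<and>
     (\<forall>x. \<forall>e>0. \<exists>y. algebraic_over_rat y \<and> absv (x - y) < e)"

definition vector_space_ax :: "('k::field \<Rightarrow> 'e::ab_group_add \<Rightarrow> 'e) \<Rightarrow> bool" where
  "vector_space_ax smul \<longleftrightarrow>
     (\<forall>a x y. smul a (x + y) = smul a x + smul a y) \<and>
     (\<forall>a b x. smul (a + b) x = smul a x + smul b x) \<and>
     (\<forall>a b x. smul a (smul b x) = smul (a * b) x) \<and>
     (\<forall>x. smul 1 x = x)"

definition nonarch_banach ::
  "('k::field \<Rightarrow> real) \<Rightarrow> ('k \<Rightarrow> 'e::ab_group_add \<Rightarrow> 'e) \<Rightarrow> ('e \<Rightarrow> real) \<Rightarrow> bool" where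
  "nonarch_banach absv smul nrm \<longleftrightarrow>
     vector_space_ax smul \<and>
     (\<forall>x. 0 \<le> nrm x) \<and> (\<forall>x. nrm x = 0 \<longleftrightarrow> x = 0) \<and>
     (\<forall>a x. nrm (smul a x) = absv a * nrm x) \<and>
     (\<forall>x y. nrm (x + y) \<le> max (nrm x) (nrm y)) \<and>
     (\<forall>X :: nat \<Rightarrow> 'e. (\<forall>e>0. \<exists>N. \<forall>m\<ge>N. \<forall>n\<ge>N. nrm (X m - X n) < e)
          \<longrightarrow> (\<exists>L. (\<lambda>n. nrm (X n - L)) \<longlonglongrightarrow> 0))"

definition linear_map ::
  "('k \<Rightarrow> 'e::ab_group_add \<Rightarrow> 'e) \<Rightarrow> ('k \<Rightarrow> 'f::ab_group_add \<Rightarrow> 'f) \<Rightarrow> ('e \<Rightarrow> 'f) \<Rightarrow> bool" where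
  "linear_map smulE smulF A \<longleftrightarrow>
     (\<forall>x y. A (x + y) = A x + A y) \<and> (\<forall>a x. A (smulE a x) = smulF a (A x))"

definition bounded_op :: "('e \<Rightarrow> real) \<Rightarrow> ('e \<Rightarrow> 'e) \<Rightarrow> bool" where
  "bounded_op nrm A \<longleftrightarrow> (\<exists>c\<ge>0. \<forall>u. nrm (A u) \<le> c * nrm u)"

definition op_norm :: "('e \<Rightarrow> real) \<Rightarrow> ('e \<Rightarrow> 'e) \<Rightarrow> real" where
  "op_norm nrm A = Inf {c. 0 \<le> c \<and> (\<forall>u. nrm (A u) \<le> c * nrm u)}"

definition c0 :: "('e \<Rightarrow> real) \<Rightarrow> (nat \<Rightarrow> 'e) set" where
  "c0 nrm = {x. (\<lambda>j. nrm (x j)) \<longlonglongrightarrow> 0}"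

definition c0_norm :: "('e \<Rightarrow> real) \<Rightarrow> (nat \<Rightarrow> 'e) \<Rightarrow> real" where
  "c0_norm nrm x = (SUP j. nrm (x j))"

definition c0_smul :: "('k \<Rightarrow> 'e \<Rightarrow> 'e) \<Rightarrow> 'k \<Rightarrow> (nat \<Rightarrow> 'e) \<Rightarrow> (nat \<Rightarrow> 'e)" where
  "c0_smul smul a x = (\<lambda>j. smul a (x j))"

definition backward_shift :: "(nat \<Rightarrow> 'e) \<Rightarrow> (nat \<Rightarrow> 'e)" where
  "backward_shift x = (\<lambda>j. x (Suc j))"

definition linear_into_c0 ::
  "('k \<Rightarrow> 'e::ab_group_add \<Rightarrow> 'e) \<Rightarrow> ('e \<Rightarrow> (nat \<Rightarrow> 'e)) \<Rightarrow> bool" where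
  "linear_into_c0 smul W \<longleftrightarrow>
     (\<forall>x y. W (x + y) = (\<lambda>j. W x j + W y j)) \<and> (\<forall>a x. W (smul a x) = c0_smul smul a (W x))"

definition closed_subspace_c0 ::
  "('k \<Rightarrow> 'e::ab_group_add \<Rightarrow> 'e) \<Rightarrow> ('e \<Rightarrow> real) \<Rightarrow> (nat \<Rightarrow> 'e) set \<Rightarrow> bool" where
  "closed_subspace_c0 smul nrm Y \<longleftrightarrow>
     Y \<subseteq> c0 nrm \<and> (\<lambda>j. 0) \<in> Y \<and>
     (\<forall>x\<in>Y. \<forall>y\<in>Y. (\<lambda>j. x j + y j) \<in> Y) \<and> (\<forall>a. \<forall>x\<in>Y. c0_smul smul a x \<in> Y) \<and>
     (\<forall>ys x. (\<forall>k. ys k \<in> Y) \<and> x \<in> c0 nrm \<and> (\<lambda>k. c0_norm nrm (\<lambda>j. ys k j - x j)) \<longlonglongrightarrow> 0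
            \<longrightarrow> x \<in> Y)"

end

theory Submission
  imports Defs
begin

text \<open>The orbit map \<open>W u = (u, A u, A\<^sup>2 u, \<dots>)\<close> does the job. It lands in \<open>c\<^sub>0(E)\<close> because
  \<open>A\<^sup>n u \<rightarrow> 0\<close>, it is an isometry because \<open>\<parallel>A\<parallel> \<le> 1\<close> makes \<open>\<parallel>u\<parallel>\<close> the largest entry, and it
  intertwines \<open>A\<close> with the backward shift. Its range \<open>Y\<close> is closed: if \<open>W u\<^sub>k \<rightarrow> x\<close> in \<open>c\<^sub>0(E)\<close>,
  then \<open>x = W (x\<^sub>0)\<close>, since by the ultrametric inequality and contractivity every entry of
  \<open>x - W (x\<^sub>0)\<close> has norm at most \<open>\<parallel>W u\<^sub>k - x\<parallel>\<close>. Of the field only the non-Archimedean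
  absolute value is used.\<close>

lemma vector_space_ax_smul_zero_left:
  fixes smul :: "'k::field \<Rightarrow> 'e::ab_group_add \<Rightarrow> 'e"
  assumes "vector_space_ax smul"
  shows "smul 0 x = 0"
proof -
  have "smul (0 + 0) x = smul 0 x + smul 0 x"
    using assms unfolding vector_space_ax_def by blast
  then show ?thesis by simp
qed

lemma vector_space_ax_smul_minus_one:
  fixes smul :: "'k::field \<Rightarrow> 'e::ab_group_add \<Rightarrow> 'e"
  assumes "vector_space_ax smul"
  shows "smul (-1) x = - x"
proof -
  have "smul (-1 + 1) x = smul (-1) x + smul 1 x"
    using assms unfolding vector_space_ax_def by blast
  moreover have "smul 1 x = x"
    using assms unfolding vector_space_ax_def by blast
  ultimately have "smul (-1) x + x = 0"
    using vector_space_ax_smul_zero_left[OF assms] by simp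
  then show ?thesis by (simp add: eq_neg_iff_add_eq_0)
qed

lemma nonarch_abs_minus_one:
  assumes "nonarch_abs absv"
  shows "absv (-1) = 1"
proof -
  have mult: "absv (x * y) = absv x * absv y" for x y
    using assms unfolding nonarch_abs_def by blast
  have "absv 1 \<noteq> 0" "absv (-1) \<ge> 0"
    using assms unfolding nonarch_abs_def by auto
  moreover have "absv 1 = absv 1 * absv 1" "absv 1 = absv (-1) * absv (-1)"
    using mult[of 1 1] mult[of "-1" "-1"] by simp_all
  ultimately have "(absv (-1))\<^sup>2 = 1" by (simp add: power2_eq_square)
  with \<open>absv (-1) \<ge> 0\<close> show ?thesis by (simp add: power2_eq_1_iff)
qed

lemma nonarch_banach_norm_minus:
  assumes "nonarch_banach absv smul nrm" "nonarch_abs absv"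
  shows "nrm (- x) = nrm x"
proof -
  have "vector_space_ax smul" "nrm (smul (-1) x) = absv (-1) * nrm x"
    using assms(1) unfolding nonarch_banach_def by blast+
  then show ?thesis
    using vector_space_ax_smul_minus_one[of smul x] nonarch_abs_minus_one[OF assms(2)] by simp
qed

lemma nonarch_banach_norm_diff_le_max:
  assumes "nonarch_banach absv smul nrm" "nonarch_abs absv"
  shows "nrm (x - y) \<le> max (nrm x) (nrm y)"
proof -
  have "nrm (x + - y) \<le> max (nrm x) (nrm (- y))"
    using assms(1) unfolding nonarch_banach_def by blast
  then show ?thesis using nonarch_banach_norm_minus[OF assms] by simp
qed

lemma nonarch_banach_dist_triangle:
  assumes "nonarch_banach absv smul nrm"
  shows "nrm (x - z) \<le> max (nrm (x - y)) (nrm (y - z))"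
proof -
  have "nrm ((x - y) + (y - z)) \<le> max (nrm (x - y)) (nrm (y - z))"
    using assms unfolding nonarch_banach_def by blast
  then show ?thesis by simp
qed

lemma linear_map_funpow_add:
  assumes "linear_map smul smul A"
  shows "(A ^^ n) (x + y) = (A ^^ n) x + (A ^^ n) y"
  using assms by (induction n) (auto simp: linear_map_def)

lemma linear_map_funpow_smul:
  assumes "linear_map smul smul A"
  shows "(A ^^ n) (smul a x) = smul a ((A ^^ n) x)"
  using assms by (induction n) (auto simp: linear_map_def)

lemma linear_map_funpow_diff:
  fixes A :: "'e::ab_group_add \<Rightarrow> 'e"
  assumes "linear_map smul smul A"
  shows "(A ^^ n) (x - y) = (A ^^ n) x - (A ^^ n) y"
  using linear_map_funpow_add[OF assms, of n "x - y" y] by (simp add: eq_diff_eq)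

lemma linear_map_funpow_zero:
  fixes A :: "'e::ab_group_add \<Rightarrow> 'e"
  assumes "linear_map smul smul A"
  shows "(A ^^ n) 0 = 0"
  using linear_map_funpow_diff[OF assms, of n 0 0] by simp

lemma bounded_op_norm_le:
  assumes "bounded_op nrm A" "0 \<le> nrm u"
  shows "nrm (A u) \<le> op_norm nrm A * nrm u"
proof -
  let ?S = "{c. 0 \<le> c \<and> (\<forall>u. nrm (A u) \<le> c * nrm u)}"
  obtain c where c: "c \<in> ?S" using assms(1) unfolding bounded_op_def by blast
  show ?thesis
  proof (cases "nrm u = 0")
    case True
    have "nrm (A u) \<le> c * nrm u" using c by blast
    then show ?thesis using True by simp
  next
    case False
    with assms(2) have pos: "0 < nrm u" by simp
    have "nrm (A u) / nrm u \<le> Inf ?S"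
    proof (rule cInf_greatest)
      show "?S \<noteq> {}" using c by blast
      show "nrm (A u) / nrm u \<le> c'" if "c' \<in> ?S" for c'
        using that pos by (simp add: divide_le_eq)
    qed
    then show ?thesis using pos unfolding op_norm_def by (simp add: divide_le_eq)
  qed
qed

lemma op_norm_le_one_funpow_norm_le:
  assumes "\<And>x. 0 \<le> nrm x" "bounded_op nrm A" "op_norm nrm A \<le> 1"
  shows "nrm ((A ^^ n) u) \<le> nrm u"
proof (induction n)
  case 0
  then show ?case by simp
next
  case (Suc n)
  have "nrm (A ((A ^^ n) u)) \<le> op_norm nrm A * nrm ((A ^^ n) u)"
    using bounded_op_norm_le[OF assms(2,1)] .
  also have "\<dots> \<le> nrm ((A ^^ n) u)"
    using mult_right_mono[OF assms(3) assms(1)] by simp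
  finally show ?case using Suc by simp
qed

lemma c0_bdd_above:
  assumes "x \<in> c0 nrm"
  shows "bdd_above (range (\<lambda>j. nrm (x j)))"
proof -
  have "convergent (\<lambda>j. nrm (x j))"
    using assms unfolding c0_def convergent_def by blast
  then have "Bseq (\<lambda>j. nrm (x j))" by (rule convergent_imp_Bseq)
  then obtain K where "\<And>j. norm (nrm (x j)) \<le> K" by (metis BseqE)
  then show ?thesis by (intro bdd_aboveI2[where M = K]) (simp add: abs_le_iff)
qed

lemma c0_norm_upper:
  assumes "x \<in> c0 nrm"
  shows "nrm (x j) \<le> c0_norm nrm x"
  unfolding c0_norm_def by (rule cSUP_upper[OF UNIV_I c0_bdd_above[OF assms]])

lemma c0_diff:
  assumes "nonarch_banach absv smul nrm" "nonarch_abs absv" "x \<in> c0 nrm" "y \<in> c0 nrm"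
  shows "(\<lambda>j. x j - y j) \<in> c0 nrm"
proof -
  have "(\<lambda>j. max (nrm (x j)) (nrm (y j))) \<longlonglongrightarrow> max 0 0"
    using assms(3,4) unfolding c0_def by (intro tendsto_max) auto
  then have upper: "(\<lambda>j. max (nrm (x j)) (nrm (y j))) \<longlonglongrightarrow> 0" by simp
  have "0 \<le> nrm (x j - y j)" for j
    using assms(1) unfolding nonarch_banach_def by blast
  then have "(\<lambda>j. nrm (x j - y j)) \<longlonglongrightarrow> 0"
    using nonarch_banach_norm_diff_le_max[OF assms(1,2)]
    by (intro tendsto_sandwich[OF always_eventually always_eventually tendsto_const upper]) simp_all
  then show ?thesis unfolding c0_def by simp
qed

definition orbit_map :: "('e \<Rightarrow> 'e) \<Rightarrow> 'e \<Rightarrow> nat \<Rightarrow> 'e" where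
  "orbit_map A u = (\<lambda>j. (A ^^ j) u)"

lemma inj_orbit_map: "inj (orbit_map A)"
  by (rule injI) (metis funpow_0 orbit_map_def)

lemma backward_shift_orbit_map: "backward_shift (orbit_map A u) = orbit_map A (A u)"
  by (simp add: orbit_map_def backward_shift_def funpow_Suc_right del: funpow.simps)

lemma linear_into_c0_orbit_map:
  assumes "linear_map smul smul A"
  shows "linear_into_c0 smul (orbit_map A)"
  unfolding linear_into_c0_def orbit_map_def c0_smul_def
  by (simp add: linear_map_funpow_add[OF assms] linear_map_funpow_smul[OF assms])

lemma c0_norm_orbit_map:
  assumes "\<And>n u. nrm ((A ^^ n) u) \<le> nrm u"
  shows "c0_norm nrm (orbit_map A u) = nrm u"
proof (rule antisym)
  show "c0_norm nrm (orbit_map A u) \<le> nrm u"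
    unfolding c0_norm_def orbit_map_def by (rule cSUP_least) (auto simp: assms)
  have "bdd_above (range (\<lambda>j. nrm (orbit_map A u j)))"
    by (rule bdd_aboveI2[where M = "nrm u"]) (simp add: orbit_map_def assms)
  then have "nrm (orbit_map A u 0) \<le> c0_norm nrm (orbit_map A u)"
    unfolding c0_norm_def by (rule cSUP_upper[OF UNIV_I])
  then show "nrm u \<le> c0_norm nrm (orbit_map A u)" by (simp add: orbit_map_def)
qed

lemma orbit_map_dist_bound:
  assumes B: "nonarch_banach absv smul nrm" and na: "nonarch_abs absv"
    and L: "linear_map smul smul A" and contr: "\<And>n u. nrm ((A ^^ n) u) \<le> nrm u"
    and u: "orbit_map A u \<in> c0 nrm" and x: "x \<in> c0 nrm"
  shows "nrm (x j - (A ^^ j) (x 0)) \<le> c0_norm nrm (\<lambda>i. orbit_map A u i - x i)"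
proof -
  let ?d = "\<lambda>i. orbit_map A u i - x i"
  have d: "nrm (?d i) \<le> c0_norm nrm ?d" for i
    by (rule c0_norm_upper[OF c0_diff[OF B na u x]])
  have "nrm (x j - (A ^^ j) u) = nrm (?d j)"
    using nonarch_banach_norm_minus[OF B na, of "?d j"] by (simp add: orbit_map_def)
  moreover have "nrm ((A ^^ j) u - (A ^^ j) (x 0)) \<le> nrm (?d 0)"
    using contr[of j "u - x 0"] by (simp add: orbit_map_def linear_map_funpow_diff[OF L])
  ultimately show ?thesis
    using nonarch_banach_dist_triangle[OF B, where x = "x j" and y = "(A ^^ j) u"
        and z = "(A ^^ j) (x 0)"] d[of j] d[of 0]
    by linarith
qed

lemma orbit_map_limit:
  assumes B: "nonarch_banach absv smul nrm" and na: "nonarch_abs absv"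
    and L: "linear_map smul smul A" and contr: "\<And>n u. nrm ((A ^^ n) u) \<le> nrm u"
    and orbit_c0: "\<And>u. orbit_map A u \<in> c0 nrm"
    and ys: "\<And>k. ys k \<in> range (orbit_map A)" and x: "x \<in> c0 nrm"
    and lim: "(\<lambda>k. c0_norm nrm (\<lambda>j. ys k j - x j)) \<longlonglongrightarrow> 0"
  shows "x = orbit_map A (x 0)"
proof -
  have "x j = (A ^^ j) (x 0)" for j
  proof -
    have "nrm (x j - (A ^^ j) (x 0)) \<le> c0_norm nrm (\<lambda>i. ys k i - x i)" for k
    proof -
      obtain u where "ys k = orbit_map A u" using ys by blast
      then show ?thesis
        using orbit_map_dist_bound[of absv smul nrm A, OF B na L contr orbit_c0 x] by simp
    qed
    then have "nrm (x j - (A ^^ j) (x 0)) \<le> 0"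
      using lim by (intro tendsto_lowerbound[OF _ always_eventually]) auto
    moreover have "0 \<le> nrm v" "nrm v = 0 \<longleftrightarrow> v = 0" for v
      using B unfolding nonarch_banach_def by blast+
    ultimately show ?thesis by (metis antisym eq_iff_diff_eq_0)
  qed
  then show ?thesis unfolding orbit_map_def by (rule ext)
qed

lemma closed_subspace_c0_range_orbit_map:
  assumes B: "nonarch_banach absv smul nrm" and na: "nonarch_abs absv"
    and L: "linear_map smul smul A" and contr: "\<And>n u. nrm ((A ^^ n) u) \<le> nrm u"
    and orbit_c0: "\<And>u. orbit_map A u \<in> c0 nrm"
  shows "closed_subspace_c0 smul nrm (range (orbit_map A))"
  unfolding closed_subspace_c0_def
proof (intro conjI ballI allI impI)
  show "range (orbit_map A) \<subseteq> c0 nrm" using orbit_c0 by blast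
  show "(\<lambda>j. 0) \<in> range (orbit_map A)"
    by (rule range_eqI[of _ _ 0]) (simp add: orbit_map_def linear_map_funpow_zero[OF L])
  have lin: "linear_into_c0 smul (orbit_map A)" by (rule linear_into_c0_orbit_map[OF L])
  show "(\<lambda>j. x j + y j) \<in> range (orbit_map A)"
    if x: "x \<in> range (orbit_map A)" and y: "y \<in> range (orbit_map A)" for x y
  proof -
    obtain v w where "x = orbit_map A v" "y = orbit_map A w" using x y by blast
    then have "(\<lambda>j. x j + y j) = orbit_map A (v + w)"
      using lin unfolding linear_into_c0_def by simp
    then show ?thesis by simp
  qed
  show "c0_smul smul a x \<in> range (orbit_map A)" if x: "x \<in> range (orbit_map A)" for a x
  proof -
    obtain v where "x = orbit_map A v" using x by blast
    then have "c0_smul smul a x = orbit_map A (smul a v)"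
      using lin unfolding linear_into_c0_def by simp
    then show ?thesis by simp
  qed
next
  fix ys x
  assume "(\<forall>k. ys k \<in> range (orbit_map A)) \<and> x \<in> c0 nrm \<and>
    (\<lambda>k. c0_norm nrm (\<lambda>j. ys k j - x j)) \<longlonglongrightarrow> 0"
  then have "x = orbit_map A (x 0)"
    using orbit_map_limit[of absv smul nrm A, OF B na L contr orbit_c0] by blast
  then show "x \<in> range (orbit_map A)" by simp
qed

theorem theorem3:
  fixes p :: nat
    and absv :: "'k::field_char_0 \<Rightarrow> real"
    and smul :: "'k \<Rightarrow> 'e::ab_group_add \<Rightarrow> 'e"
    and nrm :: "'e \<Rightarrow> real"
    and A :: "'e \<Rightarrow> 'e"
  assumes "is_Cp p absv"
    and "nonarch_banach absv smul nrm"
    and "linear_map smul smul A"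
    and "bounded_op nrm A"
    and "op_norm nrm A \<le> 1"
    and "\<forall>u. (\<lambda>n. nrm ((A ^^ n) u)) \<longlonglongrightarrow> 0"
  shows "\<exists>Y W. closed_subspace_c0 smul nrm Y \<and> backward_shift ` Y \<subseteq> Y \<and>
           linear_into_c0 smul W \<and> bij_betw W UNIV Y \<and>
           (\<forall>u. c0_norm nrm (W u) = nrm u) \<and>
           (\<forall>u. A u = inv_into UNIV W (backward_shift (W u)))"
proof -
  have na: "nonarch_abs absv" using assms(1) unfolding is_Cp_def by blast
  have "0 \<le> nrm u" for u using assms(2) unfolding nonarch_banach_def by blast
  then have contr: "nrm ((A ^^ n) u) \<le> nrm u" for n u
    by (rule op_norm_le_one_funpow_norm_le[OF _ assms(4,5)])
  have orbit_c0: "orbit_map A u \<in> c0 nrm" for u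
    using assms(6) by (simp add: c0_def orbit_map_def)
  let ?W = "orbit_map A"
  have shift: "backward_shift ` range ?W \<subseteq> range ?W"
    by (auto simp: backward_shift_orbit_map)
  have bij: "bij_betw ?W UNIV (range ?W)"
    by (simp add: bij_betw_def inj_orbit_map)
  have intertwines: "A u = inv_into UNIV ?W (backward_shift (?W u))" for u
    by (simp add: backward_shift_orbit_map inv_into_f_f[OF inj_orbit_map])
  show ?thesis
  proof (intro exI[of _ "range ?W"] exI[of _ ?W] conjI allI)
    show "closed_subspace_c0 smul nrm (range ?W)"
      by (rule closed_subspace_c0_range_orbit_map[of absv smul nrm A,
            OF assms(2) na assms(3) contr orbit_c0])
    show "linear_into_c0 smul ?W" by (rule linear_into_c0_orbit_map[OF assms(3)])
    show "c0_norm nrm (?W u) = nrm u" for u by (rule c0_norm_orbit_map[of nrm A, OF contr])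
  qed (fact shift bij intertwines)+
qed

end
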